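(* Let $f:X\to X$ be a piecewise contracting map on a compact, locally connected metric space $(X,d)$, with discontinuity set $\Delta$ and attractor $\Lambda$. If $\Delta=\emptyset$ or $d(\Lambda,\Delta)\neq0$, then $\Lambda$ is a finite union of periodic orbits of $f$.
   Context: A map $f:X\to X$ on a compact, locally connected metric space $(X,d)$ is piecewise contracting if there are $N\ge2$ non-empty, pairwise disjoint open sets $X_1,\dots,X_N$ with $X=\bigcup_i\overline{X_i}$, a constant $\lambda\in(0,1)$ with $d(f(x),f(y))\le\lambda d(x,y)$ for all $x,y$ in the same $X_i$, and such that $\tilde X:=\bigcap_{n\ge0}f^{-n}(X\setminus\Delta)\neq\emptyset$, where $\Delta:=X\setminus\bigcup_iX_i$ ($f$ is arbitrary on $\Delta$). For $A\subset X$ let $F_i(A):=\overline{f(A\cap X_i)}$; an atom of generation $n\ge1$ is a set $F_{i_n}\circ\cdots\circ F_{i_1}(X)$ with $i_1,\dots,i_n\in\{1,\dots,N\}$; $\Lambda_n$ is the union of all atoms of generation $n$ and the attractor is $\Lambda:=\bigcap_{n\ge1}\Lambda_n$. *)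

theory Defs
  imports "HOL-Analysis.Analysis"
begin

definition disc_set :: "'a set \<Rightarrow> nat \<Rightarrow> (nat \<Rightarrow> 'a set) \<Rightarrow> 'a set" where
  "disc_set X N P = X - (\<Union>i\<in>{1..N}. P i)"

definition piecewise_contracting ::
  "'a::metric_space set \<Rightarrow> ('a \<Rightarrow> 'a) \<Rightarrow> nat \<Rightarrow> (nat \<Rightarrow> 'a set) \<Rightarrow> real \<Rightarrow> bool" where
  "piecewise_contracting X f N P lam \<longleftrightarrow>
     f ` X \<subseteq> X \<and>
     N \<ge> 2 \<and>
     (\<forall>i\<in>{1..N}. openin (top_of_set X) (P i) \<and> P i \<noteq> {}) \<and>
     (\<forall>i\<in>{1..N}. \<forall>j\<in>{1..N}. i \<noteq> j \<longrightarrow> P i \<inter> P j = {}) \<and>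
     X = (\<Union>i\<in>{1..N}. closure (P i)) \<and>
     0 < lam \<and> lam < 1 \<and>
     (\<forall>i\<in>{1..N}. \<forall>x\<in>P i. \<forall>y\<in>P i. dist (f x) (f y) \<le> lam * dist x y) \<and>
     {x\<in>X. \<forall>n. (f ^^ n) x \<notin> disc_set X N P} \<noteq> {}"

definition F_map :: "('a::metric_space \<Rightarrow> 'a) \<Rightarrow> (nat \<Rightarrow> 'a set) \<Rightarrow> nat \<Rightarrow> 'a set \<Rightarrow> 'a set" where
  "F_map f P i A = closure (f ` (A \<inter> P i))"

fun atoms :: "'a::metric_space set \<Rightarrow> ('a \<Rightarrow> 'a) \<Rightarrow> nat \<Rightarrow> (nat \<Rightarrow> 'a set) \<Rightarrow> nat \<Rightarrow> 'a set set" where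
  "atoms X f N P 0 = {X}"
| "atoms X f N P (Suc n) = {F_map f P i A | i A. i \<in> {1..N} \<and> A \<in> atoms X f N P n}"

definition Lambda_n :: "'a::metric_space set \<Rightarrow> ('a \<Rightarrow> 'a) \<Rightarrow> nat \<Rightarrow> (nat \<Rightarrow> 'a set) \<Rightarrow> nat \<Rightarrow> 'a set" where
  "Lambda_n X f N P n = \<Union>(atoms X f N P n)"

definition attractor :: "'a::metric_space set \<Rightarrow> ('a \<Rightarrow> 'a) \<Rightarrow> nat \<Rightarrow> (nat \<Rightarrow> 'a set) \<Rightarrow> 'a set" where
  "attractor X f N P = (\<Inter>n\<in>{1..}. Lambda_n X f N P n)"

definition periodic_point :: "('a \<Rightarrow> 'a) \<Rightarrow> 'a \<Rightarrow> bool" where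
  "periodic_point f x \<longleftrightarrow> (\<exists>p>0. (f ^^ p) x = x)"

definition orbit :: "('a \<Rightarrow> 'a) \<Rightarrow> 'a \<Rightarrow> 'a set" where
  "orbit f x = {(f ^^ k) x | k. True}"

end

theory Submission
  imports Defs
begin

(*
  The attractor \<Lambda> is compact and misses the discontinuity set, so the pieces
  cover it with a Lebesgue number e. Atoms of generation m have diameter at most
  lam^m diam X, and the union of the atoms of generation m converges to \<Lambda>; hence from
  some generation on every nonempty atom lies in a single piece X_i, and then every nonempty
  atom of the next generation is the closure of the image of a nonempty atom. So the number
  of nonempty atoms stays bounded while their diameters tend to 0, which makes \<Lambda> finite.
  Finally f maps \<Lambda> into itself, and onto itself because every point of \<Lambda> has points of
  f(\<Lambda>) arbitrarily close to it; a map of a finite set onto itself is a permutation, so every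
  point of \<Lambda> is periodic and \<Lambda> is the union of their orbits.
*)

lemma finite_imp_uniformly_discrete:
  fixes S :: "'a::metric_space set"
  assumes "finite S"
  obtains \<eta> where "\<eta> > 0" "\<And>x y. x \<in> S \<Longrightarrow> y \<in> S \<Longrightarrow> x \<noteq> y \<Longrightarrow> \<eta> \<le> dist x y"
proof
  define Ds where "Ds = {dist x y | x y. x \<in> S \<and> y \<in> S \<and> x \<noteq> y}"
  have "Ds \<subseteq> (\<lambda>(x, y). dist x y) ` (S \<times> S)"
    unfolding Ds_def by auto
  then have "finite Ds"
    using assms finite_subset by blast
  then show "Min (insert 1 Ds) > 0"
    by (subst Min_gr_iff) (auto simp: Ds_def)
  show "Min (insert 1 Ds) \<le> dist x y" if "x \<in> S" "y \<in> S" "x \<noteq> y" for x y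
    using \<open>finite Ds\<close> that by (intro Min_le) (auto simp: Ds_def)
qed

lemma closure_dist_le:
  assumes "\<And>x y. x \<in> S \<Longrightarrow> y \<in> S \<Longrightarrow> dist x y \<le> c"
    and "x \<in> closure S" "y \<in> closure S"
  shows "dist x y \<le> c"
proof -
  have "closure S \<subseteq> cball y c" if "y \<in> S" for y
    using assms(1) that by (intro closure_minimal) (auto simp: dist_commute)
  then have "closure S \<subseteq> cball x c" if "x \<in> closure S" for x
    using that by (intro closure_minimal) (auto simp: dist_commute subset_iff)
  then show ?thesis
    using assms(2,3) by (meson mem_cball subsetD)
qed

lemma decseq_compact_eventually_subset_open:
  fixes K :: "nat \<Rightarrow> 'a::t2_space set"
  assumes dec: "\<And>m. K (Suc m) \<subseteq> K m" and compact: "\<And>m. compact (K m)"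
    and "open U" and "\<Inter>(range K) \<subseteq> U"
  shows "eventually (\<lambda>m. K m \<subseteq> U) sequentially"
proof -
  have antimono: "K n \<subseteq> K m" if "m \<le> n" for m n
    using lift_Suc_antimono_le[of K, OF dec that] .
  have "K 0 \<subseteq> (\<Union>m\<in>UNIV. U \<union> - K m)"
    using assms(4) by auto
  moreover have "open (U \<union> - K m)" for m
    using \<open>open U\<close> compact by (intro open_Un open_Compl compact_imp_closed)
  ultimately obtain C where "finite C" and cover: "K 0 \<subseteq> (\<Union>m\<in>C. U \<union> - K m)"
    using compactE_image[OF compact[of 0], of UNIV "\<lambda>m. U \<union> - K m"] by auto
  define M where "M = Max (insert 0 C)"
  have "- K m \<subseteq> - K M" if "m \<in> C" for m
    using that \<open>finite C\<close> antimono[of m M] by (simp add: M_def)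
  then have "K 0 \<subseteq> U \<union> - K M"
    using cover by blast
  then have "K M \<subseteq> U"
    using antimono[of 0 M] by auto
  then show ?thesis
    unfolding eventually_sequentially using antimono by (meson order_trans)
qed

lemma periodic_point_if_finite_image_eq:
  assumes "finite S" "f ` S = S" "x \<in> S"
  shows "periodic_point f x"
proof -
  have "inj_on f S"
    using assms(1,2) finite_surj_inj[of S f] by simp
  then have bij: "bij_betw (f ^^ k) S S" for k
    using assms(2) by (intro bij_betw_funpow) (simp add: bij_betw_def)
  then have orbit_in: "(f ^^ k) x \<in> S" for k
    using assms(3) bij_betw_apply by metis
  have "\<not> inj (\<lambda>k. (f ^^ k) x)"
  proof
    assume "inj (\<lambda>k. (f ^^ k) x)"
    moreover have "finite (range (\<lambda>k. (f ^^ k) x))"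
      using orbit_in assms(1) by (meson finite_subset image_subsetI)
    ultimately show False
      using finite_imageD by blast
  qed
  then obtain i j where "(f ^^ i) x = (f ^^ j) x" "i < j"
    unfolding inj_def by (metis linorder_neqE_nat)
  then have "(f ^^ i) ((f ^^ (j - i)) x) = (f ^^ i) x"
    by (metis add_diff_inverse_nat comp_apply funpow_add not_less_iff_gr_or_eq)
  then have "(f ^^ (j - i)) x = x"
    using bij[of i] orbit_in assms(3) by (auto simp: bij_betw_def dest: inj_onD)
  then show ?thesis
    unfolding periodic_point_def using \<open>i < j\<close> by (intro exI[of _ "j - i"]) auto
qed

lemma UN_orbit_eq_invariant:
  assumes "f ` S \<subseteq> S"
  shows "(\<Union>x\<in>S. orbit f x) = S"
proof -
  have "(f ^^ k) x \<in> S" if "x \<in> S" for x k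
    using that assms by (induction k) auto
  moreover have "x \<in> orbit f x" for x
    unfolding orbit_def by (auto intro: exI[of _ 0])
  ultimately show ?thesis
    unfolding orbit_def by blast
qed

lemma atoms_Suc_eq_image:
  "atoms X f N P (Suc m) = (\<lambda>(i, A). F_map f P i A) ` ({1..N} \<times> atoms X f N P m)"
  by force

lemma finite_atoms: "finite (atoms X f N P m)"
  by (induction m) (auto simp: atoms_Suc_eq_image simp del: atoms.simps(2))

lemma F_map_mono: "A \<subseteq> B \<Longrightarrow> F_map f P i A \<subseteq> F_map f P i B"
  unfolding F_map_def by (intro closure_mono image_mono) auto

lemma image_mem_F_map: "x \<in> A \<Longrightarrow> x \<in> P i \<Longrightarrow> f x \<in> F_map f P i A"
  unfolding F_map_def by (meson IntI closure_subset image_eqI subsetD)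

lemma closed_atom: "closed X \<Longrightarrow> A \<in> atoms X f N P m \<Longrightarrow> closed A"
  by (cases m) (auto simp: F_map_def)

lemma atom_subset:
  assumes "f ` X \<subseteq> X" "closed X"
  shows "A \<in> atoms X f N P m \<Longrightarrow> A \<subseteq> X"
proof (induction m arbitrary: A)
  case (Suc m)
  then obtain i B where "A = F_map f P i B" "B \<in> atoms X f N P m"
    by auto
  moreover have "f ` (B \<inter> P i) \<subseteq> X"
    using Suc.IH[OF \<open>B \<in> _\<close>] assms(1) by blast
  ultimately show ?case
    using assms(2) by (simp add: F_map_def closure_minimal)
qed simp

lemma atom_Suc_subset_atom:
  assumes "f ` X \<subseteq> X" "closed X"
  shows "A \<in> atoms X f N P (Suc m) \<Longrightarrow> \<exists>B\<in>atoms X f N P m. A \<subseteq> B"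
proof (induction m arbitrary: A)
  case 0
  then show ?case
    using atom_subset[OF assms, of A N P "Suc 0"] by simp
next
  case (Suc m)
  then obtain i B where "A = F_map f P i B" "B \<in> atoms X f N P (Suc m)" "i \<in> {1..N}"
    by auto
  moreover obtain C where "C \<in> atoms X f N P m" "B \<subseteq> C"
    using Suc.IH[OF \<open>B \<in> _\<close>] by blast
  ultimately show ?case
    using F_map_mono[OF \<open>B \<subseteq> C\<close>, of f P i] by auto
qed

lemma atoms_dist_le:
  assumes contraction: "\<And>i x y. i \<in> {1..N} \<Longrightarrow> x \<in> P i \<Longrightarrow> y \<in> P i \<Longrightarrow> dist (f x) (f y) \<le> lam * dist x y"
    and "lam \<ge> 0" and bound: "\<And>x y. x \<in> X \<Longrightarrow> y \<in> X \<Longrightarrow> dist x y \<le> D"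
  shows "A \<in> atoms X f N P m \<Longrightarrow> x \<in> A \<Longrightarrow> y \<in> A \<Longrightarrow> dist x y \<le> lam ^ m * D"
proof (induction m arbitrary: A x y)
  case 0
  then show ?case
    using bound by simp
next
  case (Suc m)
  then obtain i B where A: "A = F_map f P i B" "B \<in> atoms X f N P m" "i \<in> {1..N}"
    by auto
  have "dist u v \<le> lam ^ Suc m * D" if uv: "u \<in> f ` (B \<inter> P i)" "v \<in> f ` (B \<inter> P i)" for u v
  proof -
    obtain u' v' where "u' \<in> B" "u' \<in> P i" "u = f u'" "v' \<in> B" "v' \<in> P i" "v = f v'"
      using uv by blast
    then have "dist u v \<le> lam * dist u' v'"
      using contraction[OF A(3)] by blast
    also have "\<dots> \<le> lam * (lam ^ m * D)"
      using Suc.IH[OF A(2) \<open>u' \<in> B\<close> \<open>v' \<in> B\<close>] \<open>lam \<ge> 0\<close> by (rule mult_left_mono)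
    finally show ?thesis
      by simp
  qed
  then show ?case
    using Suc.prems(2,3)[unfolded A(1) F_map_def] by (rule closure_dist_le)
qed

locale piecewise_contraction =
  fixes X :: "'a::metric_space set" and f :: "'a \<Rightarrow> 'a"
    and N :: nat and P :: "nat \<Rightarrow> 'a set" and lam :: real
  assumes compact_space: "compact X"
    and piecewise_contracting: "piecewise_contracting X f N P lam"
begin

lemma maps_into: "f ` X \<subseteq> X"
  using piecewise_contracting unfolding piecewise_contracting_def by blast

lemma closed_space: "closed X"
  using compact_space by (rule compact_imp_closed)

lemma openin_piece: "i \<in> {1..N} \<Longrightarrow> openin (top_of_set X) (P i)"
  using piecewise_contracting unfolding piecewise_contracting_def by blast

lemma piece_subset: "i \<in> {1..N} \<Longrightarrow> P i \<subseteq> X"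
  using openin_piece openin_subset by fastforce

lemma pieces_disjoint:
  assumes "i \<in> {1..N}" "j \<in> {1..N}" "x \<in> P i" "x \<in> P j"
  shows "i = j"
proof -
  have "\<forall>i\<in>{1..N}. \<forall>j\<in>{1..N}. i \<noteq> j \<longrightarrow> P i \<inter> P j = {}"
    using piecewise_contracting unfolding piecewise_contracting_def by blast
  then show ?thesis
    using assms by blast
qed

lemma contraction:
  "i \<in> {1..N} \<Longrightarrow> x \<in> P i \<Longrightarrow> y \<in> P i \<Longrightarrow> dist (f x) (f y) \<le> lam * dist x y"
  using piecewise_contracting unfolding piecewise_contracting_def by blast

lemma contraction_constant: "0 < lam" "lam < 1"
  using piecewise_contracting unfolding piecewise_contracting_def by blast+

lemma Lambda_n_subset: "Lambda_n X f N P m \<subseteq> X"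
  unfolding Lambda_n_def using atom_subset[OF maps_into closed_space] by blast

lemma compact_Lambda_n: "compact (Lambda_n X f N P m)"
proof -
  have "closed (Lambda_n X f N P m)"
    unfolding Lambda_n_def using closed_atom[OF closed_space] by (intro closed_Union finite_atoms) blast
  then have "compact (X \<inter> Lambda_n X f N P m)"
    using compact_space by blast
  then show ?thesis
    using Lambda_n_subset by (simp add: Int_absorb1)
qed

lemma Lambda_n_Suc_subset: "Lambda_n X f N P (Suc m) \<subseteq> Lambda_n X f N P m"
  using atom_Suc_subset_atom[OF maps_into closed_space] unfolding Lambda_n_def by blast

lemma attractor_eq_Inter: "attractor X f N P = \<Inter>(range (Lambda_n X f N P))"
proof -
  have "x \<in> Lambda_n X f N P n" if "\<forall>k\<in>{1..}. x \<in> Lambda_n X f N P k" for x n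
    using that Lambda_n_Suc_subset[of n] by auto
  then show ?thesis
    unfolding attractor_def by blast
qed

lemma attractor_subset_Lambda_n: "attractor X f N P \<subseteq> Lambda_n X f N P m"
  unfolding attractor_eq_Inter by blast

lemma attractor_subset_space: "attractor X f N P \<subseteq> X"
  using attractor_subset_Lambda_n Lambda_n_subset by blast

lemma compact_attractor: "compact (attractor X f N P)"
proof -
  have "closed (attractor X f N P)"
    unfolding attractor_eq_Inter using compact_Lambda_n by (simp add: closed_INT compact_imp_closed)
  then have "compact (Lambda_n X f N P 0 \<inter> attractor X f N P)"
    using compact_Lambda_n by blast
  then show ?thesis
    using attractor_subset_Lambda_n by (simp add: Int_absorb1)
qed

lemma eventually_atoms_small:
  assumes "r > 0"
  shows "eventually (\<lambda>m. \<forall>A\<in>atoms X f N P m. \<forall>x\<in>A. \<forall>y\<in>A. dist x y < r) sequentially"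
proof -
  have "(\<lambda>m. lam ^ m * diameter X) \<longlonglongrightarrow> 0"
    using contraction_constant by (intro tendsto_mult_left_zero LIMSEQ_power_zero) simp
  then have "eventually (\<lambda>m. lam ^ m * diameter X < r) sequentially"
    using assms by (rule order_tendstoD)
  then show ?thesis
  proof (rule eventually_mono, intro ballI)
    fix m A x y
    assume "lam ^ m * diameter X < r" and xy: "A \<in> atoms X f N P m" "x \<in> A" "y \<in> A"
    have "dist x y \<le> lam ^ m * diameter X"
      using atoms_dist_le[OF contraction _ diameter_bounded_bound[OF compact_imp_bounded[OF compact_space]]]
        contraction_constant xy by simp
    with \<open>lam ^ m * diameter X < r\<close> show "dist x y < r"
      by linarith
  qed
qed

lemma eventually_Lambda_n_near_attractor:
  assumes "r > 0"
  shows "eventually (\<lambda>m. Lambda_n X f N P m \<subseteq> (\<Union>z\<in>attractor X f N P. ball z r)) sequentially"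
proof (rule decseq_compact_eventually_subset_open)
  show "Lambda_n X f N P (Suc m) \<subseteq> Lambda_n X f N P m" for m
    by (rule Lambda_n_Suc_subset)
  show "\<Inter>(range (Lambda_n X f N P)) \<subseteq> (\<Union>z\<in>attractor X f N P. ball z r)"
    using assms unfolding attractor_eq_Inter by force
qed (auto simp: compact_Lambda_n)

lemma nonempty_atoms_Suc_subset:
  assumes "\<forall>A\<in>atoms X f N P m. A \<noteq> {} \<longrightarrow> (\<exists>i\<in>{1..N}. A \<subseteq> P i)"
  shows "atoms X f N P (Suc m) - {{}} \<subseteq> (\<lambda>A. closure (f ` A)) ` (atoms X f N P m - {{}})"
proof
  fix A' assume "A' \<in> atoms X f N P (Suc m) - {{}}"
  then obtain j A where A': "A' = F_map f P j A" "A \<in> atoms X f N P m" "j \<in> {1..N}" "A' \<noteq> {}"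
    by auto
  then have "A \<inter> P j \<noteq> {}"
    by (auto simp: F_map_def)
  moreover obtain i where "i \<in> {1..N}" "A \<subseteq> P i"
    using assms A'(2) calculation by blast
  ultimately have "A \<subseteq> P j"
    using pieces_disjoint[OF _ A'(3)] by (metis disjoint_iff subset_iff)
  then have "A' = closure (f ` A)"
    using A'(1) by (simp add: F_map_def Int_absorb2)
  then show "A' \<in> (\<lambda>A. closure (f ` A)) ` (atoms X f N P m - {{}})"
    using A' by blast
qed

end

locale separated_piecewise_contraction = piecewise_contraction +
  assumes attractor_disjoint_disc: "attractor X f N P \<inter> disc_set X N P = {}"
begin

lemma attractor_in_piece:
  assumes "x \<in> attractor X f N P"
  obtains i where "i \<in> {1..N}" "x \<in> P i"
  using assms attractor_disjoint_disc attractor_subset_space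
  unfolding disc_set_def by blast

lemma attractor_invariant: "f ` attractor X f N P \<subseteq> attractor X f N P"
proof
  fix y assume "y \<in> f ` attractor X f N P"
  then obtain x where x: "x \<in> attractor X f N P" "y = f x"
    by blast
  obtain i where i: "i \<in> {1..N}" "x \<in> P i"
    using attractor_in_piece[OF x(1)] .
  have "y \<in> Lambda_n X f N P (Suc m)" for m
  proof -
    obtain A where "A \<in> atoms X f N P m" "x \<in> A"
      using x(1) attractor_subset_Lambda_n[of m] unfolding Lambda_n_def by blast
    then have "F_map f P i A \<in> atoms X f N P (Suc m)" "y \<in> F_map f P i A"
      using i x(2) image_mem_F_map by auto
    then show ?thesis
      unfolding Lambda_n_def by blast
  qed
  then have "y \<in> Lambda_n X f N P m" for m
    using Lambda_n_Suc_subset by blast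
  then show "y \<in> attractor X f N P"
    unfolding attractor_eq_Inter by blast
qed

lemma attractor_Lebesgue_number:
  obtains e where "e > 0" "\<And>x. x \<in> attractor X f N P \<Longrightarrow> \<exists>i\<in>{1..N}. ball x e \<inter> X \<subseteq> P i"
proof -
  have "\<forall>i\<in>{1..N}. \<exists>U. open U \<and> P i = X \<inter> U"
  proof
    fix i assume "i \<in> {1..N}"
    show "\<exists>U. open U \<and> P i = X \<inter> U"
      using openin_piece[OF \<open>i \<in> {1..N}\<close>] unfolding openin_open .
  qed
  then obtain U where U: "\<forall>i\<in>{1..N}. open (U i) \<and> P i = X \<inter> U i"
    using bchoice[OF \<open>\<forall>i\<in>{1..N}. \<exists>U. _\<close>] by blast
  have cover: "attractor X f N P \<subseteq> \<Union>(U ` {1..N})"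
  proof
    fix x assume "x \<in> attractor X f N P"
    then obtain i where "i \<in> {1..N}" "x \<in> P i"
      by (rule attractor_in_piece)
    then show "x \<in> \<Union>(U ` {1..N})"
      using U by blast
  qed
  obtain e where e: "e > 0" "\<And>x. x \<in> attractor X f N P \<Longrightarrow> \<exists>G\<in>U ` {1..N}. ball x e \<subseteq> G"
    by (rule Heine_Borel_lemma[OF compact_attractor cover]) (use U in auto)
  show thesis
  proof (rule that[OF e(1)])
    fix x assume "x \<in> attractor X f N P"
    then obtain i where "i \<in> {1..N}" "ball x e \<subseteq> U i"
      using e(2) by blast
    then show "\<exists>i\<in>{1..N}. ball x e \<inter> X \<subseteq> P i"
      using U by blast
  qed
qed

lemma eventually_atoms_in_piece:
  "eventually (\<lambda>m. \<forall>A\<in>atoms X f N P m. A \<noteq> {} \<longrightarrow> (\<exists>i\<in>{1..N}. A \<subseteq> P i)) sequentially"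
proof -
  obtain e where e: "e > 0" "\<And>x. x \<in> attractor X f N P \<Longrightarrow> \<exists>i\<in>{1..N}. ball x e \<inter> X \<subseteq> P i"
    using attractor_Lebesgue_number by blast
  have "eventually (\<lambda>m. Lambda_n X f N P m \<subseteq> (\<Union>z\<in>attractor X f N P. ball z (e/2)) \<and>
      (\<forall>A\<in>atoms X f N P m. \<forall>x\<in>A. \<forall>y\<in>A. dist x y < e/2)) sequentially"
    using e(1) by (intro eventually_conj eventually_Lambda_n_near_attractor eventually_atoms_small) simp_all
  then show ?thesis
  proof (rule eventually_mono, intro ballI impI)
    fix m A
    assume near: "Lambda_n X f N P m \<subseteq> (\<Union>z\<in>attractor X f N P. ball z (e/2)) \<and>
        (\<forall>A\<in>atoms X f N P m. \<forall>x\<in>A. \<forall>y\<in>A. dist x y < e/2)"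
      and A: "A \<in> atoms X f N P m" "A \<noteq> {}"
    obtain a where "a \<in> A"
      using A(2) by blast
    then have "a \<in> Lambda_n X f N P m"
      using A(1) unfolding Lambda_n_def by blast
    then obtain z where z: "z \<in> attractor X f N P" "dist z a < e/2"
      using near by auto
    have "A \<subseteq> ball z e"
    proof
      fix y assume "y \<in> A"
      then have "dist a y < e/2"
        using near A(1) \<open>a \<in> A\<close> by blast
      then show "y \<in> ball z e"
        using z(2) dist_triangle[of z y a] by simp
    qed
    moreover have "A \<subseteq> X"
      using atom_subset[OF maps_into closed_space A(1)] .
    ultimately show "\<exists>i\<in>{1..N}. A \<subseteq> P i"
      using e(2)[OF z(1)] by blast
  qed
qed

lemma eventually_card_nonempty_atoms_le:
  obtains K where "eventually (\<lambda>m. card (atoms X f N P m - {{}}) \<le> K) sequentially"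
proof -
  obtain m0 where m0: "\<And>m. m \<ge> m0 \<Longrightarrow> \<forall>A\<in>atoms X f N P m. A \<noteq> {} \<longrightarrow> (\<exists>i\<in>{1..N}. A \<subseteq> P i)"
    using eventually_atoms_in_piece unfolding eventually_sequentially by blast
  have "card (atoms X f N P m - {{}}) \<le> card (atoms X f N P m0 - {{}})" if "m \<ge> m0" for m
    using that
  proof (induction m rule: dec_induct)
    case (step m)
    have "card (atoms X f N P (Suc m) - {{}}) \<le> card ((\<lambda>A. closure (f ` A)) ` (atoms X f N P m - {{}}))"
      using nonempty_atoms_Suc_subset[OF m0[OF step(1)]] by (intro card_mono) (simp_all add: finite_atoms)
    also have "\<dots> \<le> card (atoms X f N P m - {{}})"
      by (rule card_image_le) (simp add: finite_atoms)
    finally show ?case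
      using step(3) by linarith
  qed simp
  then show thesis
    using that unfolding eventually_sequentially by blast
qed

lemma finite_attractor: "finite (attractor X f N P)"
proof (rule ccontr)
  assume "infinite (attractor X f N P)"
  obtain K where K: "eventually (\<lambda>m. card (atoms X f N P m - {{}}) \<le> K) sequentially"
    by (rule eventually_card_nonempty_atoms_le)
  obtain T where T: "T \<subseteq> attractor X f N P" "finite T" "card T = Suc K"
    using \<open>infinite _\<close> infinite_arbitrarily_large by blast
  obtain \<eta> where \<eta>: "\<eta> > 0" "\<And>x y. x \<in> T \<Longrightarrow> y \<in> T \<Longrightarrow> x \<noteq> y \<Longrightarrow> \<eta> \<le> dist x y"
    using finite_imp_uniformly_discrete[OF T(2)] by blast
  obtain m where m: "card (atoms X f N P m - {{}}) \<le> K"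
    "\<forall>A\<in>atoms X f N P m. \<forall>x\<in>A. \<forall>y\<in>A. dist x y < \<eta>"
    using eventually_happens'[OF sequentially_bot eventually_conj[OF K eventually_atoms_small[OF \<eta>(1)]]]
    by blast
  have "\<forall>x\<in>T. \<exists>A. A \<in> atoms X f N P m - {{}} \<and> x \<in> A"
    using T(1) attractor_subset_Lambda_n[of m] unfolding Lambda_n_def by blast
  then obtain g where g: "\<And>x. x \<in> T \<Longrightarrow> g x \<in> atoms X f N P m - {{}} \<and> x \<in> g x"
    by metis
  have "inj_on g T"
  proof (rule inj_onI, rule ccontr)
    fix x y assume xy: "x \<in> T" "y \<in> T" "g x = g y" "x \<noteq> y"
    then have "dist x y < \<eta>"
      using g m(2) by (metis Diff_iff)
    then show False
      using \<eta>(2)[OF xy(1,2,4)] by simp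
  qed
  then have "card T \<le> card (atoms X f N P m - {{}})"
    using g by (intro card_inj_on_le) (auto simp: finite_atoms)
  then show False
    using T(3) m(1) by linarith
qed

lemma attractor_approx_preimage:
  assumes y: "y \<in> attractor X f N P" and "\<epsilon> > 0"
  shows "\<exists>z\<in>attractor X f N P. dist (f z) y < \<epsilon>"
proof -
  \<comment> \<open>y lies in a small atom F_map f P j A; a point a of A \<inter> P j is close to some z in the
    attractor, which by the Lebesgue number lies in the same piece P j, so f z is close to f a.\<close>
  obtain e where e: "e > 0" "\<And>x. x \<in> attractor X f N P \<Longrightarrow> \<exists>i\<in>{1..N}. ball x e \<inter> X \<subseteq> P i"
    using attractor_Lebesgue_number by blast
  define r where "r = min e (\<epsilon>/2)"
  have "r > 0"
    using e(1) \<open>\<epsilon> > 0\<close> by (simp add: r_def)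
  have "eventually (\<lambda>m. \<forall>A\<in>atoms X f N P (Suc m). \<forall>x\<in>A. \<forall>y\<in>A. dist x y < r) sequentially"
    using eventually_atoms_small[OF \<open>r > 0\<close>]
      eventually_sequentially_Suc[of "\<lambda>m. \<forall>A\<in>atoms X f N P m. \<forall>x\<in>A. \<forall>y\<in>A. dist x y < r"]
    by blast
  from eventually_happens'[OF sequentially_bot eventually_conj[OF eventually_Lambda_n_near_attractor[OF \<open>r > 0\<close>] this]]
  obtain m where near: "Lambda_n X f N P m \<subseteq> (\<Union>z\<in>attractor X f N P. ball z r)"
    and small: "\<forall>A\<in>atoms X f N P (Suc m). \<forall>x\<in>A. \<forall>y\<in>A. dist x y < r"
    by blast
  obtain A' where A': "A' \<in> atoms X f N P (Suc m)" "y \<in> A'"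
    using y attractor_subset_Lambda_n[of "Suc m"] unfolding Lambda_n_def by blast
  then obtain j A where jA: "A' = F_map f P j A" "A \<in> atoms X f N P m" "j \<in> {1..N}"
    by auto
  have "A \<inter> P j \<noteq> {}"
    using jA(1) A'(2) by (auto simp: F_map_def)
  then obtain a where a: "a \<in> A" "a \<in> P j"
    by blast
  then have "a \<in> Lambda_n X f N P m"
    using jA(2) unfolding Lambda_n_def by blast
  then obtain z where z: "z \<in> attractor X f N P" "dist z a < r"
    using near by auto
  have "z \<in> P j"
  proof -
    obtain i where i: "i \<in> {1..N}" "ball z e \<inter> X \<subseteq> P i"
      using e(2)[OF z(1)] by blast
    have "a \<in> P i"
      using i(2) z(2) piece_subset[OF jA(3)] a(2) by (auto simp: r_def)
    then have "i = j"
      using pieces_disjoint[OF i(1) jA(3) _ a(2)] by blast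
    moreover have "z \<in> P i"
      using i(2) e(1) z(1) attractor_subset_space by auto
    ultimately show ?thesis
      by simp
  qed
  have "dist (f z) (f a) \<le> dist z a"
    using contraction[OF jA(3) \<open>z \<in> P j\<close> a(2)] contraction_constant zero_le_dist[of z a]
    by (smt (verit) mult_left_le_one_le)
  moreover have "dist (f a) y < r"
    using small A' jA(1) image_mem_F_map[of a A P j f, OF a] by blast
  ultimately have "dist (f z) y < \<epsilon>"
    using z(2) dist_triangle[of "f z" y "f a"] by (simp add: r_def)
  then show ?thesis
    using z(1) by blast
qed

lemma attractor_subset_image: "attractor X f N P \<subseteq> f ` attractor X f N P"
proof
  fix y assume y: "y \<in> attractor X f N P"
  obtain \<eta> where \<eta>: "\<eta> > 0"
    "\<And>x y. x \<in> attractor X f N P \<Longrightarrow> y \<in> attractor X f N P \<Longrightarrow> x \<noteq> y \<Longrightarrow> \<eta> \<le> dist x y"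
    using finite_imp_uniformly_discrete[OF finite_attractor] by blast
  obtain z where z: "z \<in> attractor X f N P" "dist (f z) y < \<eta>"
    using attractor_approx_preimage[OF y \<eta>(1)] by blast
  then have "f z = y"
    using \<eta>(2)[of "f z" y] attractor_invariant y by force
  then show "y \<in> f ` attractor X f N P"
    using z(1) by blast
qed

end

theorem theorem3:
  fixes X :: "'a::metric_space set" and f :: "'a \<Rightarrow> 'a"
    and N :: nat and P :: "nat \<Rightarrow> 'a set" and lam :: real
  assumes "compact X"
    and "locally connected X"
    and "piecewise_contracting X f N P lam"
    and "disc_set X N P = {} \<or> setdist (attractor X f N P) (disc_set X N P) \<noteq> 0"
  shows "\<exists>S. finite S \<and> (\<forall>x\<in>S. x \<in> X \<and> periodic_point f x) \<and>
             attractor X f N P = (\<Union>x\<in>S. orbit f x)"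
proof -
  interpret separated_piecewise_contraction X f N P lam
  proof
    show "compact X" "piecewise_contracting X f N P lam"
      using assms(1,3) .
    show "attractor X f N P \<inter> disc_set X N P = {}"
      using assms(4) setdist_eq_0I by blast
  qed
  have invariant: "f ` attractor X f N P = attractor X f N P"
    using attractor_invariant attractor_subset_image by blast
  show ?thesis
  proof (intro exI[of _ "attractor X f N P"] conjI ballI)
    show "finite (attractor X f N P)"
      by (rule finite_attractor)
    show "x \<in> X" "periodic_point f x" if "x \<in> attractor X f N P" for x
      using that attractor_subset_space periodic_point_if_finite_image_eq[OF finite_attractor invariant]
      by blast+
    show "attractor X f N P = (\<Union>x\<in>attractor X f N P. orbit f x)"
      using UN_orbit_eq_invariant[of f "attractor X f N P"] invariant by simp
  qed
qed

end
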